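(* Let $q$ be a prime power, $n,r$ integers with $r\le\lfloor n/2\rfloor$, $0<\rho<r$, and let $\mathcal{C}\subseteq E_r(q,n)$ have covering radius $\rho$. Let $\mathcal{A} = \{U\in E_r(q,n): d_{\mathrm{I}}(U,\mathcal{C}) = \rho\}$ and $\mathcal{Z} = \{Z\in E_r(q,n): E_{\mathcal{C}}(\{Z\})\ge 1\}$. Then for every $U\in\mathcal{A}\setminus\mathcal{Z}$, $E_{\mathcal{C}}(B_1(U))\ge\epsilon$, where $\epsilon = \left\lceil\frac{b_\rho}{c_{\rho+1}}\right\rceil c_{\rho+1} - b_\rho$.
   Context: $E_r(q,n)$ is the set of $r$-dimensional subspaces of $\mathrm{GF}(q)^n$ with injection distance $d_{\mathrm{I}}(U,V)=\dim(U+V)-\min\{\dim U,\dim V\}$; $d_{\mathrm{I}}(U,\mathcal{C}) = \min_{C\in\mathcal{C}}d_{\mathrm{I}}(U,C)$; $B_t(U)=\{V\in E_r(q,n): d_{\mathrm{I}}(U,V)\le t\}$. The covering radius of $\mathcal{C}$ is $\max_U d_{\mathrm{I}}(U,\mathcal{C})$. For $V\subseteq E_r(q,n)$, the excess of $\mathcal{C}$ on $V$ is $E_{\mathcal{C}}(V) = \sum_{C\in\mathcal{C}}|B_\rho(C)\cap V| - |V|$. ${m\brack k}=\prod_{i=0}^{k-1}\frac{q^m-q^i}{q^k-q^i}$; $c_j={j\brack1}^2$ and $b_j = q^{2j+1}{r-j\brack1}{n-r-j\brack1}$. *)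

theory Defs
  imports "HOL-Analysis.Analysis"
begin

text \<open>Ambient space GF(q)^n is modelled as 'a^'n with 'a a finite field
 (q = CARD('a)) and n = CARD('n).\<close>

definition Er :: "nat \<Rightarrow> ('a::{finite,field}^'n::finite) set set" where
  "Er r = {U. vec.subspace U \<and> vec.dim U = r}"

definition dI :: "('a::{finite,field}^'n::finite) set \<Rightarrow> ('a^'n) set \<Rightarrow> nat" where
  "dI U V = vec.dim (vec.span (U \<union> V)) - min (vec.dim U) (vec.dim V)"

definition dIC :: "('a::{finite,field}^'n::finite) set \<Rightarrow> ('a^'n) set set \<Rightarrow> nat" where
  "dIC U C = Min ((\<lambda>X. dI U X) ` C)"

definition ballI :: "nat \<Rightarrow> nat \<Rightarrow> ('a::{finite,field}^'n::finite) set \<Rightarrow> ('a^'n) set set" where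
  "ballI r t U = {V \<in> Er r. dI U V \<le> t}"

definition covering_radius :: "nat \<Rightarrow> ('a::{finite,field}^'n::finite) set set \<Rightarrow> nat" where
  "covering_radius r C = Max ((\<lambda>U. dIC U C) ` Er r)"

definition excess :: "nat \<Rightarrow> nat \<Rightarrow> ('a::{finite,field}^'n::finite) set set \<Rightarrow> ('a^'n) set set \<Rightarrow> int" where
  "excess r \<rho> C V = (\<Sum>X\<in>C. int (card (ballI r \<rho> X \<inter> V))) - int (card V)"

definition gbin :: "nat \<Rightarrow> nat \<Rightarrow> nat \<Rightarrow> real" where
  "gbin q m k = (\<Prod>i<k. (real q ^ m - real q ^ i) / (real q ^ k - real q ^ i))"

definition cc :: "nat \<Rightarrow> nat \<Rightarrow> real" where
  "cc q j = (gbin q j 1)^2"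

definition bb :: "nat \<Rightarrow> nat \<Rightarrow> nat \<Rightarrow> nat \<Rightarrow> real" where
  "bb q n r j = real q ^ (2*j+1) * gbin q (r-j) 1 * gbin q (n-r-j) 1"

end

theory Submission
  imports Defs
begin

text \<open>
  Since \<open>U \<notin> Z\<close>, exactly one codeword \<open>C0\<close> lies within distance \<open>\<rho>\<close> of \<open>U\<close>, and it lies
  at distance exactly \<open>\<rho>\<close>. By the triangle inequality, any other codeword \<open>X\<close> whose
  \<open>\<rho>\<close>-ball meets \<open>B_1(U)\<close> is at distance exactly \<open>\<rho> + 1\<close> from \<open>U\<close>, and then the two balls
  meet in exactly \<open>c_(\<rho>+1)\<close> subspaces: the sums \<open>W + J\<close> of a hyperplane \<open>W\<close> of \<open>U\<close>
  through \<open>U \<inter> X\<close> and a cover \<open>J\<close> of \<open>U \<inter> X\<close> inside \<open>X\<close>. So if \<open>M\<close> is the set of these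
  codewords, the excess on \<open>B_1(U)\<close> is \<open>|M| c_(\<rho>+1) - |B_1(U) - B_\<rho>(C0)|\<close>, and a second
  count (covers \<open>V\<close> of hyperplanes \<open>W\<close> of \<open>U\<close> avoiding \<open>U \<inter> C0\<close>, with \<open>V \<not>\<subseteq> W + C0\<close>)
  gives \<open>|B_1(U) - B_\<rho>(C0)| = b_\<rho>\<close>. As the covering radius is \<open>\<rho>\<close>, the balls around \<open>M\<close>
  cover these \<open>b_\<rho>\<close> subspaces, whence \<open>|M| c_(\<rho>+1) \<ge> b_\<rho>\<close> and \<open>|M|\<close> is at least the ceiling.
\<close>

section \<open>Counting subspaces over a finite field\<close>

lemma of_nat_card_Diff_subset:
  assumes "finite A" "B \<subseteq> A"
  shows "(of_nat (card (A - B)) :: 'b::ring_1) = of_nat (card A) - of_nat (card B)"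
  using assms by (simp add: card_Diff_subset card_mono finite_subset of_nat_diff)

lemma card_field_ge_two: "2 \<le> CARD('a::{finite,field})"
proof -
  have "card {0::'a, 1} \<le> CARD('a)" by (rule card_mono) auto
  then show ?thesis by simp
qed

lemma card_span_independent:
  fixes B :: "('a::{finite,field}^'n::finite) set"
  assumes indep: "vec.independent B"
  shows "card (vec.span B) = CARD('a) ^ card B"
proof -
  let ?comb = "\<lambda>u. \<Sum>v\<in>B. u v *s v"
  have fin: "finite B" using indep by (rule vec.finiteI_independent)
  have span_eq: "vec.span B = ?comb ` (B \<rightarrow>\<^sub>E UNIV)"
  proof -
    have "?comb u \<in> ?comb ` (B \<rightarrow>\<^sub>E UNIV)" for u
    proof (rule image_eqI)
      show "?comb u = ?comb (restrict u B)" by (rule sum.cong) auto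
    qed auto
    then show ?thesis unfolding vec.span_finite[OF fin] by blast
  qed
  have "inj_on ?comb (B \<rightarrow>\<^sub>E UNIV)"
  proof (rule inj_onI)
    fix u w assume u: "u \<in> B \<rightarrow>\<^sub>E UNIV" and w: "w \<in> B \<rightarrow>\<^sub>E UNIV" and eq: "?comb u = ?comb w"
    have "(\<Sum>v\<in>B. (u v - w v) *s v) = 0"
      using eq by (simp add: vec.scale_left_diff_distrib sum_subtractf)
    then have "\<forall>v\<in>B. u v - w v = 0"
      using indep[unfolded vec.independent_explicit] by (auto dest: spec[of _ "\<lambda>v. u v - w v"])
    then show "u = w" using u w by (intro PiE_ext) auto
  qed
  then have "card (vec.span B) = card (B \<rightarrow>\<^sub>E (UNIV :: 'a set))"
    unfolding span_eq by (rule card_image)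
  then show ?thesis using fin by (simp add: card_PiE)
qed

lemma card_subspace:
  fixes S :: "('a::{finite,field}^'n::finite) set"
  assumes "vec.subspace S"
  shows "card S = CARD('a) ^ vec.dim S"
proof -
  obtain B where "B \<subseteq> S" "vec.independent B" "vec.span B = S" "card B = vec.dim S"
    using vec.basis_subspace_exists[OF assms] by metis
  then show ?thesis using card_span_independent by metis
qed

lemma dim_span_Un_add_dim_Int:
  fixes A B :: "('a::{finite,field}^'n::finite) set"
  assumes "vec.subspace A" "vec.subspace B"
  shows "vec.dim (vec.span (A \<union> B)) + vec.dim (A \<inter> B) = vec.dim A + vec.dim B"
proof -
  have "vec.span A = A" "vec.span B = B" using assms by (metis vec.span_eq_iff)+
  then show ?thesis using vec.dim_sums_Int[OF assms] by (simp only: vec.span_Un)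
qed

lemma dim_span_insert_notin:
  fixes W :: "('a::{finite,field}^'n::finite) set"
  assumes "vec.subspace W" "x \<notin> W"
  shows "vec.dim (vec.span (insert x W)) = vec.dim W + 1"
proof -
  have "vec.span W = W" using assms(1) by (metis vec.span_eq_iff)
  then show ?thesis using assms(2) vec.dim_insert[of x W] by (simp del: vec.span_eq_iff)
qed

definition covers_within :: "('a::{finite,field}^'n::finite) set \<Rightarrow> ('a^'n) set \<Rightarrow> ('a^'n) set set" where
  "covers_within W Y = {V. vec.subspace V \<and> W \<subseteq> V \<and> V \<subseteq> Y \<and> vec.dim V = vec.dim W + 1}"

definition hyperplanes_over :: "('a::{finite,field}^'n::finite) set \<Rightarrow> ('a^'n) set \<Rightarrow> ('a^'n) set set" where
  "hyperplanes_over I U = {W. vec.subspace W \<and> I \<subseteq> W \<and> W \<subseteq> U \<and> vec.dim W + 1 = vec.dim U}"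

lemma cover_eq_span_insert:
  fixes W Y V :: "('a::{finite,field}^'n::finite) set"
  assumes W: "vec.subspace W" and V: "V \<in> covers_within W Y" and x: "x \<in> V" "x \<notin> W"
  shows "V = vec.span (insert x W)"
proof -
  have V': "vec.subspace V" "W \<subseteq> V" "vec.dim V = vec.dim W + 1"
    using V by (auto simp: covers_within_def)
  have "vec.span (insert x W) \<subseteq> V" using V' x by (intro vec.span_minimal) auto
  moreover have "vec.dim V \<le> vec.dim (vec.span (insert x W))"
    using dim_span_insert_notin[OF W x(2)] V' by simp
  ultimately show ?thesis using V' by (intro vec.subspace_dim_equal[symmetric]) auto
qed

lemma Diff_eq_UN_covers_within:
  fixes W Y :: "('a::{finite,field}^'n::finite) set"
  assumes W: "vec.subspace W" and Y: "vec.subspace Y" and WY: "W \<subseteq> Y"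
  shows "Y - W = (\<Union>V\<in>covers_within W Y. V - W)"
proof (intro equalityI subsetI)
  fix x assume x: "x \<in> Y - W"
  have "vec.span (insert x W) \<subseteq> Y" using x WY Y by (intro vec.span_minimal) auto
  then have "vec.span (insert x W) \<in> covers_within W Y"
    using x dim_span_insert_notin[OF W, of x] vec.span_superset[of "insert x W"]
    by (auto simp: covers_within_def)
  moreover have "x \<in> vec.span (insert x W) - W" using x vec.span_base[of x "insert x W"] by auto
  ultimately show "x \<in> (\<Union>V\<in>covers_within W Y. V - W)" by blast
qed (auto simp: covers_within_def)

lemma card_Diff_eq_card_covers_within_mult:
  fixes W Y :: "('a::{finite,field}^'n::finite) set"
  assumes W: "vec.subspace W" and Y: "vec.subspace Y" and WY: "W \<subseteq> Y"
  shows "card (Y - W) = card (covers_within W Y) * (CARD('a) ^ (vec.dim W + 1) - CARD('a) ^ vec.dim W)"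
proof -
  have disjoint: "(V - W) \<inter> (V' - W) = {}"
    if "V \<in> covers_within W Y" "V' \<in> covers_within W Y" "V \<noteq> V'" for V V'
    using that cover_eq_span_insert[OF W] by blast
  have card_V: "card (V - W) = CARD('a) ^ (vec.dim W + 1) - CARD('a) ^ vec.dim W"
    if "V \<in> covers_within W Y" for V
  proof -
    have "vec.subspace V" "W \<subseteq> V" "vec.dim V = vec.dim W + 1"
      using that by (auto simp: covers_within_def)
    then show ?thesis using W by (simp add: card_Diff_subset card_subspace)
  qed
  have "card (Y - W) = (\<Sum>V\<in>covers_within W Y. card (V - W))"
    unfolding Diff_eq_UN_covers_within[OF assms] using disjoint by (intro card_UN_disjoint) auto
  then show ?thesis using card_V by simp
qed

lemma gbin_1: "gbin q m 1 = (real q ^ m - 1) / (real q - 1)"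
  by (simp add: gbin_def)

lemma gbin_1_pos:
  assumes "2 \<le> q" "0 < m"
  shows "0 < gbin q m 1"
proof -
  have "1 < real q ^ m" using assms by (intro one_less_power) auto
  then show ?thesis using assms(1) unfolding gbin_1 by (auto intro: divide_pos_pos)
qed

lemma gbin_1_add_diff: "gbin q (m + k) 1 - gbin q m 1 = real q ^ m * gbin q k 1"
  unfolding gbin_1 by (simp add: diff_divide_distrib[symmetric] power_add algebra_simps)

lemma bb_eq_gbin:
  assumes "\<rho> < r" "r + \<rho> \<le> n"
  shows "bb q n r \<rho> = (gbin q r 1 - gbin q \<rho> 1) * (gbin q (n + 1 - r) 1 - gbin q (\<rho> + 1) 1)"
proof -
  obtain a b where r: "r = \<rho> + a" and n: "n = r + \<rho> + b"
    using assms by (metis less_imp_add_positive le_add_diff_inverse)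
  have "n + 1 - r = (\<rho> + 1) + b" "r - \<rho> = a" "n - r - \<rho> = b" using r n by simp_all
  moreover have "real q ^ (2 * \<rho> + 1) = real q ^ \<rho> * real q ^ (\<rho> + 1)"
    by (simp add: power_add[symmetric] mult_2)
  ultimately show ?thesis unfolding bb_def by (simp only: r gbin_1_add_diff) simp
qed

lemma card_covers_within:
  fixes W Y :: "('a::{finite,field}^'n::finite) set"
  assumes W: "vec.subspace W" and Y: "vec.subspace Y" and WY: "W \<subseteq> Y"
  shows "real (card (covers_within W Y)) = gbin CARD('a) (vec.dim Y - vec.dim W) 1"
proof -
  let ?q = "real CARD('a)" and ?w = "vec.dim W"
  have q: "2 \<le> ?q" using card_field_ge_two[where 'a='a] by simp
  obtain k where y: "vec.dim Y = ?w + k" using vec.dim_subset[OF WY] le_Suc_ex by blast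
  have "real (card (Y - W)) = real (card Y) - real (card W)"
    using WY by (intro of_nat_card_Diff_subset) auto
  also have "\<dots> = ?q ^ ?w * (?q ^ k - 1)"
    using card_subspace[OF Y] card_subspace[OF W] y by (simp add: power_add right_diff_distrib)
  finally have "real (card (Y - W)) = ?q ^ ?w * (?q ^ k - 1)" .
  moreover have "real (CARD('a) ^ (?w + 1) - CARD('a) ^ ?w) = ?q ^ ?w * (?q - 1)"
  proof -
    have "CARD('a) ^ ?w \<le> CARD('a) ^ (?w + 1)" using q by (intro power_increasing) auto
    then show ?thesis by (simp add: of_nat_diff right_diff_distrib)
  qed
  then have "real (card (Y - W)) = ?q ^ ?w * (real (card (covers_within W Y)) * (?q - 1))"
    unfolding card_Diff_eq_card_covers_within_mult[OF assms] of_nat_mult by simp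
  ultimately have "real (card (covers_within W Y)) * (?q - 1) = ?q ^ k - 1"
    using q by simp
  then show ?thesis unfolding gbin_1 y using q by (simp add: eq_divide_eq)
qed

lemma card_hyperplanes_over:
  fixes I U :: "('a::{finite,field}^'n::finite) set"
  assumes "vec.subspace I" "vec.subspace U" "I \<subseteq> U" "vec.dim U = vec.dim I + m" "0 < m"
  shows "real (card (hyperplanes_over I U)) = gbin CARD('a) m 1"
  using assms
proof (induction m arbitrary: I)
  case 0
  then show ?case by simp
next
  case (Suc m)
  let ?q = "CARD('a)"
  have q: "2 \<le> ?q" by (rule card_field_ge_two)
  show ?case
  proof (cases "m = 0")
    case True
    have "W = I" if "W \<in> hyperplanes_over I U" for W
      using that Suc.prems True vec.subspace_dim_equal[of I W] by (auto simp: hyperplanes_over_def)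
    then have "hyperplanes_over I U = {I}"
      using Suc.prems True by (auto simp: hyperplanes_over_def)
    then show ?thesis using True q by (simp add: gbin_def)
  next
    case False
    \<comment> \<open>double counting the flags \<open>I \<subset> L \<subset> W\<close>, \<open>L\<close> a cover of \<open>I\<close>, \<open>W\<close> a hyperplane of \<open>U\<close>\<close>
    let ?P = "SIGMA W:hyperplanes_over I U. covers_within I W"
    let ?Q = "SIGMA L:covers_within I U. hyperplanes_over L U"
    have "?P = (\<lambda>(L, W). (W, L)) ` ?Q"
      by (auto simp: hyperplanes_over_def covers_within_def image_iff)
    moreover have "inj_on (\<lambda>(L, W). (W, L)) ?Q" by (auto simp: inj_on_def)
    ultimately have card_PQ: "card ?P = card ?Q" by (simp add: card_image)
    have "real (card ?P) = (\<Sum>W\<in>hyperplanes_over I U. real (card (covers_within I W)))"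
      by simp
    also have "\<dots> = real (card (hyperplanes_over I U)) * gbin ?q m 1"
      using Suc.prems card_covers_within[of I]
      by (simp add: hyperplanes_over_def)
    finally have P: "real (card ?P) = real (card (hyperplanes_over I U)) * gbin ?q m 1" .
    have "real (card ?Q) = (\<Sum>L\<in>covers_within I U. real (card (hyperplanes_over L U)))"
      by simp
    also have "\<dots> = real (card (covers_within I U)) * gbin ?q m 1"
      using Suc.prems Suc.IH False by (simp add: covers_within_def)
    also have "\<dots> = gbin ?q (Suc m) 1 * gbin ?q m 1"
      using Suc.prems card_covers_within[of I U] by simp
    finally show ?thesis using P card_PQ gbin_1_pos[OF q, of m] False by simp
  qed
qed

section \<open>The injection distance\<close>

lemma dI_commute: "dI U V = dI V U"
  unfolding dI_def by (simp add: Un_commute min.commute)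

lemma dI_add_dim_Int:
  fixes U V :: "('a::{finite,field}^'n::finite) set"
  assumes "U \<in> Er r" "V \<in> Er r"
  shows "dI U V + vec.dim (U \<inter> V) = r"
proof -
  have U: "vec.subspace U" "vec.dim U = r" and V: "vec.subspace V" "vec.dim V = r"
    using assms by (auto simp: Er_def)
  have "vec.dim U \<le> vec.dim (vec.span (U \<union> V))"
    by (rule vec.dim_subset) (meson Un_upper1 vec.span_superset order_trans)
  then show ?thesis
    using dim_span_Un_add_dim_Int[OF U(1) V(1)] U V unfolding dI_def by linarith
qed

lemma dim_Int_add_dim_Int_le:
  fixes V A B :: "('a::{finite,field}^'n::finite) set"
  assumes V: "vec.subspace V" and "vec.subspace A" "vec.subspace B"
  shows "vec.dim (V \<inter> A) + vec.dim (V \<inter> B) \<le> vec.dim V + vec.dim (V \<inter> A \<inter> B)"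
proof -
  have "vec.subspace (V \<inter> A)" "vec.subspace (V \<inter> B)"
    using assms vec.subspace_inter by blast+
  moreover have "(V \<inter> A) \<inter> (V \<inter> B) = V \<inter> A \<inter> B" by blast
  ultimately have "vec.dim (vec.span ((V \<inter> A) \<union> (V \<inter> B))) + vec.dim (V \<inter> A \<inter> B)
      = vec.dim (V \<inter> A) + vec.dim (V \<inter> B)"
    using dim_span_Un_add_dim_Int by metis
  moreover have "vec.span ((V \<inter> A) \<union> (V \<inter> B)) \<subseteq> V"
    using V by (intro vec.span_minimal) auto
  then have "vec.dim (vec.span ((V \<inter> A) \<union> (V \<inter> B))) \<le> vec.dim V"
    by (rule vec.dim_subset)
  ultimately show ?thesis by linarith
qed

lemma dI_triangle:
  fixes U V X :: "('a::{finite,field}^'n::finite) set"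
  assumes U: "U \<in> Er r" and V: "V \<in> Er r" and X: "X \<in> Er r"
  shows "dI U X \<le> dI U V + dI V X"
proof -
  have "vec.dim (V \<inter> U) + vec.dim (V \<inter> X) \<le> vec.dim V + vec.dim (V \<inter> U \<inter> X)"
    using assms by (intro dim_Int_add_dim_Int_le) (auto simp: Er_def)
  moreover have "vec.dim (V \<inter> U \<inter> X) \<le> vec.dim (U \<inter> X)" by (rule vec.dim_subset) blast
  moreover have "vec.dim V = r" using V by (simp add: Er_def)
  ultimately show ?thesis
    using dI_add_dim_Int[OF U V, unfolded Int_commute[of U V]] dI_add_dim_Int[OF V X]
      dI_add_dim_Int[OF U X]
    by linarith
qed

section \<open>Intersections of balls\<close>

lemma span_Un_hyperplane_cover:
  fixes U X W J :: "('a::{finite,field}^'n::finite) set"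
  assumes U: "U \<in> Er r" and X: "X \<in> Er r"
    and W: "W \<in> hyperplanes_over (U \<inter> X) U" and J: "J \<in> covers_within (U \<inter> X) X"
  shows "vec.span (W \<union> J) \<in> Er r" and "vec.span (W \<union> J) \<inter> U = W"
    and "vec.span (W \<union> J) \<inter> X = J"
proof -
  define V where "V = vec.span (W \<union> J)"
  have u: "vec.subspace U" "vec.dim U = r" and x: "vec.subspace X" "vec.dim X = r"
    using U X by (auto simp: Er_def)
  have w: "vec.subspace W" "U \<inter> X \<subseteq> W" "W \<subseteq> U" "vec.dim W + 1 = r"
    using W u by (auto simp: hyperplanes_over_def)
  have j: "vec.subspace J" "U \<inter> X \<subseteq> J" "J \<subseteq> X" "vec.dim J = vec.dim (U \<inter> X) + 1"
    using J by (auto simp: covers_within_def)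
  have "W \<inter> J = U \<inter> X" using w j by blast
  then have dim_V: "vec.dim V = r"
    using dim_span_Un_add_dim_Int[OF w(1) j(1)] w j unfolding V_def by simp
  have V: "vec.subspace V" "W \<subseteq> V" "J \<subseteq> V"
    unfolding V_def using vec.span_superset[of "W \<union> J"] by auto
  have VU: "V \<inter> U = W"
  proof -
    have VU_sub: "vec.subspace (V \<inter> U)" using V(1) u(1) by (rule vec.subspace_inter)
    have "\<not> V \<subseteq> U"
    proof
      assume "V \<subseteq> U"
      then have "vec.dim J \<le> vec.dim (U \<inter> X)" using V j by (intro vec.dim_subset) blast
      then show False using j by simp
    qed
    then have "\<not> r \<le> vec.dim (V \<inter> U)"
      using vec.subspace_dim_equal[OF VU_sub V(1)] dim_V by auto
    then show ?thesis
      using vec.subspace_dim_equal[OF w(1) VU_sub] w V by auto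
  qed
  have VX: "V \<inter> X = J"
  proof -
    have "vec.dim W + vec.dim (V \<inter> X) \<le> vec.dim V + vec.dim (W \<inter> X)"
      using dim_Int_add_dim_Int_le[OF V(1) u(1) x(1)] unfolding VU .
    moreover have "vec.dim (W \<inter> X) \<le> vec.dim (U \<inter> X)"
      using w by (intro vec.dim_subset) blast
    ultimately have "vec.dim (V \<inter> X) \<le> vec.dim J" using w j dim_V by linarith
    moreover have "vec.subspace (V \<inter> X)" using V(1) x(1) by (rule vec.subspace_inter)
    ultimately show ?thesis
      using vec.subspace_dim_equal[of J "V \<inter> X"] j V by auto
  qed
  show "vec.span (W \<union> J) \<in> Er r" "vec.span (W \<union> J) \<inter> U = W" "vec.span (W \<union> J) \<inter> X = J"
    using V dim_V VU VX unfolding V_def Er_def by simp_all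
qed

lemma ball_Int_ball1_split:
  fixes U X V :: "('a::{finite,field}^'n::finite) set"
  assumes U: "U \<in> Er r" and X: "X \<in> Er r" and dUX: "dI U X = \<rho> + 1"
    and V: "V \<in> ballI r \<rho> X \<inter> ballI r 1 U"
  shows "V \<inter> U \<in> hyperplanes_over (U \<inter> X) U" and "V \<inter> X \<in> covers_within (U \<inter> X) X"
    and "vec.span ((V \<inter> U) \<union> (V \<inter> X)) = V"
proof -
  have u: "vec.subspace U" "vec.dim U = r" and x: "vec.subspace X" "vec.dim X = r"
    and v: "V \<in> Er r" "vec.subspace V" "vec.dim V = r" "dI X V \<le> \<rho>" "dI U V \<le> 1"
    using U X V by (auto simp: Er_def ballI_def)
  have "vec.dim (V \<inter> U) + vec.dim (V \<inter> X) \<le> vec.dim V + vec.dim (V \<inter> U \<inter> X)"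
    by (rule dim_Int_add_dim_Int_le[OF v(2) u(1) x(1)])
  moreover have "vec.dim (V \<inter> U \<inter> X) \<le> vec.dim (U \<inter> X)" by (rule vec.dim_subset) blast
  ultimately have dim_VU: "vec.dim (V \<inter> U) + 1 = r"
    and dim_VX: "vec.dim (V \<inter> X) = vec.dim (U \<inter> X) + 1"
    and dim_VUX: "vec.dim (U \<inter> X) \<le> vec.dim (V \<inter> U \<inter> X)"
    using dI_add_dim_Int[OF U X] dI_add_dim_Int[OF X v(1)] dI_add_dim_Int[OF U v(1)] dUX v
    by (simp_all add: Int_commute)
  have sub: "vec.subspace (V \<inter> U)" "vec.subspace (V \<inter> X)" "vec.subspace (U \<inter> X)"
    using u x v vec.subspace_inter by blast+
  have VUX: "V \<inter> U \<inter> X = U \<inter> X"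
    using vec.subspace_dim_equal[OF _ sub(3) _ dim_VUX] u x v vec.subspace_inter by blast
  show "V \<inter> U \<in> hyperplanes_over (U \<inter> X) U" "V \<inter> X \<in> covers_within (U \<inter> X) X"
    using sub dim_VU dim_VX VUX u unfolding hyperplanes_over_def covers_within_def by auto
  have "(V \<inter> U) \<inter> (V \<inter> X) = U \<inter> X" using VUX by blast
  then have "vec.dim (vec.span ((V \<inter> U) \<union> (V \<inter> X))) = r"
    using dim_span_Un_add_dim_Int[OF sub(1,2)] dim_VU dim_VX by simp
  moreover have "vec.span ((V \<inter> U) \<union> (V \<inter> X)) \<subseteq> V" using v by (intro vec.span_minimal) auto
  ultimately show "vec.span ((V \<inter> U) \<union> (V \<inter> X)) = V"
    using vec.subspace_dim_equal v by (metis vec.subspace_span order_refl)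
qed

lemma card_ball_Int_ball1:
  fixes U X :: "('a::{finite,field}^'n::finite) set"
  assumes U: "U \<in> Er r" and X: "X \<in> Er r" and dUX: "dI U X = \<rho> + 1"
  shows "real (card (ballI r \<rho> X \<inter> ballI r 1 U)) = cc CARD('a) (\<rho> + 1)"
proof -
  let ?I = "U \<inter> X" and ?T = "ballI r \<rho> X \<inter> ballI r 1 U"
  have u: "vec.subspace U" "vec.dim U = r" and x: "vec.subspace X" "vec.dim X = r"
    using U X by (auto simp: Er_def)
  have dim_I: "vec.dim ?I + (\<rho> + 1) = r" using dI_add_dim_Int[OF U X] dUX by simp
  then have codim_I: "r - vec.dim ?I = \<rho> + 1" by simp
  have I: "vec.subspace ?I" "?I \<subseteq> U" "?I \<subseteq> X" using u x vec.subspace_inter by auto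
  have in_T: "vec.span (W \<union> J) \<in> ?T"
    if W: "W \<in> hyperplanes_over ?I U" and J: "J \<in> covers_within ?I X" for W J
  proof -
    note V = span_Un_hyperplane_cover[OF U X W J]
    have "vec.dim W + 1 = r" "vec.dim J = vec.dim ?I + 1"
      using W J u by (auto simp: hyperplanes_over_def covers_within_def)
    then show ?thesis
      using dI_add_dim_Int[OF X V(1)] dI_add_dim_Int[OF U V(1)] V dim_I
      by (auto simp: ballI_def Int_commute)
  qed
  have "bij_betw (\<lambda>(W, J). vec.span (W \<union> J)) (hyperplanes_over ?I U \<times> covers_within ?I X) ?T"
    by (rule bij_betw_byWitness[where f' = "\<lambda>V. (V \<inter> U, V \<inter> X)"])
       (use span_Un_hyperplane_cover[OF U X] ball_Int_ball1_split[OF U X dUX] in_T in auto)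
  then have "card ?T = card (hyperplanes_over ?I U) * card (covers_within ?I X)"
    by (simp add: bij_betw_same_card[symmetric] card_cartesian_product)
  moreover have "real (card (hyperplanes_over ?I U)) = gbin CARD('a) (\<rho> + 1) 1"
    using card_hyperplanes_over[OF I(1) u(1) I(2)] dim_I u by simp
  moreover have "real (card (covers_within ?I X)) = gbin CARD('a) (\<rho> + 1) 1"
    using card_covers_within[OF I(1) x(1) I(3)] codim_I x by simp
  ultimately show ?thesis by (simp add: cc_def power2_eq_square)
qed

lemma hyperplane_not_over_Int:
  fixes U C0 W :: "('a::{finite,field}^'n::finite) set"
  assumes U: "U \<in> Er r" and C0: "C0 \<in> Er r"
    and W: "W \<in> hyperplanes_over {0} U - hyperplanes_over (U \<inter> C0) U"
  shows "vec.dim (W \<inter> C0) + 1 = vec.dim (U \<inter> C0)" and "U \<subseteq> vec.span (W \<union> C0)"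
    and "vec.dim (vec.span (W \<union> C0)) + vec.dim (U \<inter> C0) = r + r"
proof -
  let ?I = "U \<inter> C0"
  have u: "vec.subspace U" "vec.dim U = r" and c: "vec.subspace C0" "vec.dim C0 = r"
    using U C0 by (auto simp: Er_def)
  have I: "vec.subspace ?I" using u c vec.subspace_inter by blast
  have w: "vec.subspace W" "W \<subseteq> U" "vec.dim W + 1 = r" "\<not> ?I \<subseteq> W"
    using W u by (auto simp: hyperplanes_over_def)
  have span_WI: "vec.span (W \<union> ?I) = U"
  proof -
    have sub: "vec.span (W \<union> ?I) \<subseteq> U" using u w by (intro vec.span_minimal) auto
    have "W \<subseteq> vec.span (W \<union> ?I)" "?I \<subseteq> vec.span (W \<union> ?I)"
      using vec.span_superset[of "W \<union> ?I"] by auto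
    then have "\<not> vec.dim (vec.span (W \<union> ?I)) \<le> vec.dim W"
      using vec.subspace_dim_equal[OF w(1) vec.subspace_span] w(4) by auto
    then show ?thesis using vec.subspace_dim_equal[OF vec.subspace_span u(1) sub] w u by simp
  qed
  have "W \<inter> ?I = W \<inter> C0" using w by blast
  then show dim_WC0: "vec.dim (W \<inter> C0) + 1 = vec.dim ?I"
    using dim_span_Un_add_dim_Int[OF w(1) I] span_WI w u by simp
  show "U \<subseteq> vec.span (W \<union> C0)"
    using span_WI vec.span_mono[of "W \<union> ?I" "W \<union> C0"] by blast
  show "vec.dim (vec.span (W \<union> C0)) + vec.dim ?I = r + r"
    using dim_span_Un_add_dim_Int[OF w(1) c(1)] dim_WC0 w c by simp
qed

lemma ball1_Diff_ball_split:
  fixes U C0 V :: "('a::{finite,field}^'n::finite) set"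
  assumes U: "U \<in> Er r" and C0: "C0 \<in> Er r" and dUC0: "dI U C0 = \<rho>"
    and V: "V \<in> ballI r 1 U - ballI r \<rho> C0"
  shows "V \<inter> U \<in> hyperplanes_over {0} U - hyperplanes_over (U \<inter> C0) U"
    and "V \<in> covers_within (V \<inter> U) UNIV - covers_within (V \<inter> U) (vec.span ((V \<inter> U) \<union> C0))"
proof -
  let ?I = "U \<inter> C0" and ?W = "V \<inter> U"
  have u: "vec.subspace U" "vec.dim U = r" and c: "vec.subspace C0" "vec.dim C0 = r"
    and v: "V \<in> Er r" "vec.subspace V" "vec.dim V = r" "dI U V \<le> 1" "\<not> dI C0 V \<le> \<rho>"
    using U C0 V by (auto simp: Er_def ballI_def)
  have dim_VC0: "vec.dim (V \<inter> C0) < vec.dim ?I"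
    using dI_add_dim_Int[OF U C0] dI_add_dim_Int[OF C0 v(1)] dUC0 v(5) by (simp add: Int_commute)
  have W: "vec.subspace ?W" using v(2) u(1) by (rule vec.subspace_inter)
  have "V \<noteq> U" using dim_VC0 by auto
  then have "\<not> r \<le> vec.dim ?W"
    using vec.subspace_dim_equal[OF W v(2)] vec.subspace_dim_equal[OF W u(1)] u v by auto
  then have dim_W: "vec.dim ?W + 1 = r"
    using dI_add_dim_Int[OF U v(1)] v(4) by (simp add: Int_commute)
  have "\<not> ?I \<subseteq> ?W"
    using vec.dim_subset[of ?I "V \<inter> C0"] dim_VC0 by auto
  then show hyp: "?W \<in> hyperplanes_over {0} U - hyperplanes_over ?I U"
    using W dim_W u vec.subspace_0[OF W] by (auto simp: hyperplanes_over_def)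
  have "\<not> V \<subseteq> vec.span (?W \<union> C0)"
  proof
    assume "V \<subseteq> vec.span (?W \<union> C0)"
    then have "vec.span (V \<union> C0) \<subseteq> vec.span (?W \<union> C0)"
      using vec.span_superset[of "?W \<union> C0"] by (intro vec.span_minimal) auto
    then have "vec.dim (vec.span (V \<union> C0)) \<le> vec.dim (vec.span (?W \<union> C0))"
      by (rule vec.dim_subset)
    then show False
      using dim_span_Un_add_dim_Int[OF v(2) c(1)] hyperplane_not_over_Int(3)[OF U C0 hyp]
        dim_VC0 u v c by linarith
  qed
  then show "V \<in> covers_within ?W UNIV - covers_within ?W (vec.span (?W \<union> C0))"
    using v dim_W by (auto simp: covers_within_def)
qed

lemma cover_in_ball1_Diff_ball:
  fixes U C0 W V :: "('a::{finite,field}^'n::finite) set"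
  assumes U: "U \<in> Er r" and C0: "C0 \<in> Er r" and dUC0: "dI U C0 = \<rho>"
    and W: "W \<in> hyperplanes_over {0} U - hyperplanes_over (U \<inter> C0) U"
    and V: "V \<in> covers_within W UNIV - covers_within W (vec.span (W \<union> C0))"
  shows "V \<in> ballI r 1 U - ballI r \<rho> C0" and "V \<inter> U = W"
proof -
  have u: "vec.subspace U" "vec.dim U = r"
    using U by (auto simp: Er_def)
  have w: "vec.subspace W" "W \<subseteq> U" "vec.dim W + 1 = r"
    using W u by (auto simp: hyperplanes_over_def)
  note W_C0 = hyperplane_not_over_Int[OF U C0 W]
  have V_cover: "V \<in> covers_within W UNIV" and V_span: "\<not> V \<subseteq> vec.span (W \<union> C0)"
    using V by (auto simp: covers_within_def)
  have v: "vec.subspace V" "W \<subseteq> V" "vec.dim V = r"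
    using V_cover w by (auto simp: covers_within_def)
  have VE: "V \<in> Er r" using v by (simp add: Er_def)
  have VU_sub: "vec.subspace (V \<inter> U)" using v(1) u(1) by (rule vec.subspace_inter)
  have "V \<inter> U \<noteq> V" using V_span W_C0(2) by blast
  then have "\<not> r \<le> vec.dim (V \<inter> U)"
    using vec.subspace_dim_equal[OF VU_sub v(1)] v(3) by auto
  then show VU: "V \<inter> U = W"
    using vec.subspace_dim_equal[OF w(1) VU_sub] v(2) w by auto
  have "vec.dim (V \<inter> C0) < vec.dim (U \<inter> C0)"
  proof (rule ccontr)
    assume "\<not> ?thesis"
    then have "\<not> vec.dim (V \<inter> C0) \<le> vec.dim (W \<inter> C0)" using W_C0(1) by linarith
    then have "\<not> V \<inter> C0 \<subseteq> W \<inter> C0" using vec.dim_subset by blast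
    then obtain x where x: "x \<in> V" "x \<in> C0" "x \<notin> W" by blast
    have "V = vec.span (insert x W)" using cover_eq_span_insert[OF w(1) V_cover x(1,3)] .
    also have "\<dots> \<subseteq> vec.span (W \<union> C0)" using x(2) by (intro vec.span_mono) auto
    finally show False using V_span by simp
  qed
  then show "V \<in> ballI r 1 U - ballI r \<rho> C0"
    using dI_add_dim_Int[OF U VE] dI_add_dim_Int[OF U C0] dI_add_dim_Int[OF C0 VE] dUC0 VU w VE
    by (auto simp: ballI_def Int_commute)
qed

lemma card_ball1_Diff_ball:
  fixes U C0 :: "('a::{finite,field}^'n::finite) set"
  assumes U: "U \<in> Er r" and C0: "C0 \<in> Er r" and dUC0: "dI U C0 = \<rho>"
    and \<rho>: "0 < \<rho>" "\<rho> < r" and rn: "r + \<rho> \<le> CARD('n)"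
  shows "real (card (ballI r 1 U - ballI r \<rho> C0)) = bb CARD('a) CARD('n) r \<rho>"
proof -
  let ?q = "CARD('a)" and ?n = "CARD('n)" and ?I = "U \<inter> C0"
  let ?H = "hyperplanes_over {0} U - hyperplanes_over ?I U"
  let ?G = "\<lambda>W. covers_within W UNIV - covers_within W (vec.span (W \<union> C0))"
  have u: "vec.subspace U" "vec.dim U = r" and c: "vec.subspace C0"
    using U C0 by (auto simp: Er_def)
  have I: "vec.subspace ?I" "?I \<subseteq> U" using u c vec.subspace_inter by auto
  have dim_I: "vec.dim U = vec.dim ?I + \<rho>" using dI_add_dim_Int[OF U C0] dUC0 u by simp
  have card_G: "real (card (?G W)) = gbin ?q (?n + 1 - r) 1 - gbin ?q (\<rho> + 1) 1"
    if W: "W \<in> ?H" for W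
  proof -
    have w: "vec.subspace W" "vec.dim W + 1 = r"
      using W u by (auto simp: hyperplanes_over_def)
    have "vec.dim (UNIV :: ('a^'n) set) - vec.dim W = ?n + 1 - r"
      using vec_dim_card[where 'a='a and 'n='n] w by simp
    moreover have "vec.dim (vec.span (W \<union> C0)) - vec.dim W = \<rho> + 1"
      using hyperplane_not_over_Int(3)[OF U C0 W] w dim_I u by simp
    moreover have "covers_within W (vec.span (W \<union> C0)) \<subseteq> covers_within W UNIV"
      by (auto simp: covers_within_def)
    ultimately show ?thesis
      using card_covers_within[OF w(1) vec.subspace_UNIV subset_UNIV]
        card_covers_within[OF w(1) vec.subspace_span, of "W \<union> C0"]
        vec.span_superset[of "W \<union> C0"]
      by (simp add: of_nat_card_Diff_subset)
  qed
  have card_H: "real (card ?H) = gbin ?q r 1 - gbin ?q \<rho> 1"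
  proof -
    have "hyperplanes_over ?I U \<subseteq> hyperplanes_over {0} U"
      using vec.subspace_0 by (auto simp: hyperplanes_over_def)
    moreover have "real (card (hyperplanes_over {0} U)) = gbin ?q r 1"
      using card_hyperplanes_over[OF vec.subspace_single_0 u(1), of r] u \<rho> vec.subspace_0[OF u(1)]
      by simp
    moreover have "real (card (hyperplanes_over ?I U)) = gbin ?q \<rho> 1"
      using card_hyperplanes_over[OF I(1) u(1) I(2) dim_I] \<rho> by simp
    ultimately show ?thesis by (simp add: of_nat_card_Diff_subset)
  qed
  have "bij_betw (\<lambda>V. (V \<inter> U, V)) (ballI r 1 U - ballI r \<rho> C0) (Sigma ?H ?G)"
    by (rule bij_betw_byWitness[where f' = snd])
       (use ball1_Diff_ball_split[OF U C0 dUC0] cover_in_ball1_Diff_ball[OF U C0 dUC0] in auto)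
  then have "real (card (ballI r 1 U - ballI r \<rho> C0)) = (\<Sum>W\<in>?H. real (card (?G W)))"
    by (simp add: bij_betw_same_card)
  also have "\<dots> = (gbin ?q r 1 - gbin ?q \<rho> 1) * (gbin ?q (?n + 1 - r) 1 - gbin ?q (\<rho> + 1) 1)"
    using card_G card_H by simp
  also have "\<dots> = bb ?q ?n r \<rho>" using bb_eq_gbin[OF \<rho>(2) rn] by simp
  finally show ?thesis .
qed

section \<open>Excess on the ball of radius one\<close>

lemma dIC_attained:
  fixes C :: "('a::{finite,field}^'n::finite) set set"
  assumes "C \<noteq> {}"
  shows "\<exists>X\<in>C. dI U X = dIC U C"
proof -
  have "dIC U C \<in> (\<lambda>X. dI U X) ` C" unfolding dIC_def using assms by (intro Min_in) auto
  then show ?thesis by auto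
qed

lemma exists_dI_le_covering_radius:
  fixes C :: "('a::{finite,field}^'n::finite) set set"
  assumes "C \<noteq> {}" "V \<in> Er r"
  shows "\<exists>X\<in>C. dI V X \<le> covering_radius r C"
proof -
  obtain X where X: "X \<in> C" "dI V X = dIC V C" using dIC_attained[OF assms(1)] by blast
  have "dIC V C \<le> covering_radius r C"
    unfolding covering_radius_def using assms(2) by (intro Max_ge) auto
  then have "dI V X \<le> covering_radius r C" using X(2) by simp
  then show ?thesis using X(1) by blast
qed

lemma excess_singleton_ge_one:
  fixes C :: "('a::{finite,field}^'n::finite) set set"
  assumes U: "U \<in> Er r" and XY: "X \<in> C" "Y \<in> C" "X \<noteq> Y" and "dI U X \<le> \<rho>" "dI U Y \<le> \<rho>"
  shows "1 \<le> excess r \<rho> C {U}"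
proof -
  let ?f = "\<lambda>Z. int (card (ballI r \<rho> Z \<inter> {U}))"
  have "?f Z = 1" if "dI U Z \<le> \<rho>" for Z
    using that U dI_commute[of Z U] by (simp add: ballI_def)
  then have "2 = (\<Sum>Z\<in>{X, Y}. ?f Z)" using assms by simp
  also have "\<dots> \<le> (\<Sum>Z\<in>C. ?f Z)" using XY by (intro sum_mono2) auto
  finally show ?thesis unfolding excess_def by simp
qed

lemma ball_Int_ball1_eq_empty:
  fixes U X :: "('a::{finite,field}^'n::finite) set"
  assumes U: "U \<in> Er r" and X: "X \<in> Er r" and far: "\<rho> + 1 < dI U X"
  shows "ballI r \<rho> X \<inter> ballI r 1 U = {}"
proof -
  have "dI U X \<le> \<rho> + 1" if "V \<in> Er r" "dI X V \<le> \<rho>" "dI U V \<le> 1" for V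
    using dI_triangle[OF U that(1) X] that dI_commute[of V X] by simp
  then show ?thesis using far by (force simp: ballI_def)
qed

lemma excess_ball1_eq:
  fixes C :: "('a::{finite,field}^'n::finite) set set"
  assumes U: "U \<in> Er r" and C: "C \<subseteq> Er r" and C0: "C0 \<in> C" "dI U C0 = \<rho>"
    and far: "\<And>X. X \<in> C \<Longrightarrow> X \<noteq> C0 \<Longrightarrow> \<rho> < dI U X"
    and \<rho>: "0 < \<rho>" "\<rho> < r" and rn: "r + \<rho> \<le> CARD('n)"
  shows "real_of_int (excess r \<rho> C (ballI r 1 U))
    = real (card {X \<in> C. dI U X = \<rho> + 1}) * cc CARD('a) (\<rho> + 1) - bb CARD('a) CARD('n) r \<rho>"
proof -
  let ?B = "ballI r 1 U" and ?M = "{X \<in> C. dI U X = \<rho> + 1}"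
  let ?meet = "\<lambda>X. real (card (ballI r \<rho> X \<inter> ?B))"
  have "(\<Sum>X\<in>C - {C0}. ?meet X) = (\<Sum>X\<in>?M. ?meet X)"
  proof (rule sum.mono_neutral_right)
    show "\<forall>X\<in>C - {C0} - ?M. ?meet X = 0"
    proof
      fix X assume X: "X \<in> C - {C0} - ?M"
      then have "\<rho> + 1 < dI U X" using far[of X] by auto
      then show "?meet X = 0" using ball_Int_ball1_eq_empty[OF U] X C by auto
    qed
  qed (use C0 in auto)
  also have "\<dots> = (\<Sum>X\<in>?M. cc CARD('a) (\<rho> + 1))"
    using card_ball_Int_ball1[OF U] C by (intro sum.cong) auto
  finally have "(\<Sum>X\<in>C. ?meet X) = ?meet C0 + real (card ?M) * cc CARD('a) (\<rho> + 1)"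
    using C0 by (simp add: sum.remove)
  moreover have "real (card ?B) = ?meet C0 + real (card (?B - ballI r \<rho> C0))"
    using card_Int_Diff[of ?B "ballI r \<rho> C0"] by (simp add: Int_commute)
  moreover have "real_of_int (excess r \<rho> C ?B) = (\<Sum>X\<in>C. ?meet X) - real (card ?B)"
    by (simp add: excess_def)
  ultimately show ?thesis
    using card_ball1_Diff_ball[OF U _ C0(2) \<rho> rn] C0 C by auto
qed

lemma bb_le_card_mult_cc:
  fixes C :: "('a::{finite,field}^'n::finite) set set"
  assumes U: "U \<in> Er r" and C: "C \<subseteq> Er r" and C0: "C0 \<in> C" "dI U C0 = \<rho>"
    and far: "\<And>X. X \<in> C \<Longrightarrow> X \<noteq> C0 \<Longrightarrow> \<rho> < dI U X"
    and cover: "\<And>V. V \<in> Er r \<Longrightarrow> \<exists>X\<in>C. dI V X \<le> \<rho>"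
    and \<rho>: "0 < \<rho>" "\<rho> < r" and rn: "r + \<rho> \<le> CARD('n)"
  shows "bb CARD('a) CARD('n) r \<rho> \<le> real (card {X \<in> C. dI U X = \<rho> + 1}) * cc CARD('a) (\<rho> + 1)"
proof -
  let ?B = "ballI r 1 U" and ?M = "{X \<in> C. dI U X = \<rho> + 1}"
  have "?B - ballI r \<rho> C0 \<subseteq> (\<Union>X\<in>?M. ballI r \<rho> X \<inter> ?B)"
  proof
    fix V assume V: "V \<in> ?B - ballI r \<rho> C0"
    then have VE: "V \<in> Er r" and "dI U V \<le> 1" "\<not> dI C0 V \<le> \<rho>" by (auto simp: ballI_def)
    obtain X where X: "X \<in> C" "dI V X \<le> \<rho>" using cover[OF VE] by blast
    then have "X \<noteq> C0" using \<open>\<not> dI C0 V \<le> \<rho>\<close> dI_commute[of V C0] by auto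
    then have "\<rho> < dI U X" using far X(1) by blast
    moreover have "dI U X \<le> dI U V + dI V X" using dI_triangle[OF U VE] X C by blast
    ultimately have "X \<in> ?M" using X \<open>dI U V \<le> 1\<close> by simp
    moreover have "V \<in> ballI r \<rho> X \<inter> ?B" using V VE X dI_commute[of V X] by (simp add: ballI_def)
    ultimately show "V \<in> (\<Union>X\<in>?M. ballI r \<rho> X \<inter> ?B)" by blast
  qed
  then have "card (?B - ballI r \<rho> C0) \<le> card (\<Union>X\<in>?M. ballI r \<rho> X \<inter> ?B)"
    by (intro card_mono) auto
  also have "\<dots> \<le> (\<Sum>X\<in>?M. card (ballI r \<rho> X \<inter> ?B))" by (rule card_UN_le) simp
  finally have "real (card (?B - ballI r \<rho> C0)) \<le> (\<Sum>X\<in>?M. real (card (ballI r \<rho> X \<inter> ?B)))"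
    unfolding of_nat_sum[symmetric] of_nat_le_iff .
  also have "\<dots> = (\<Sum>X\<in>?M. cc CARD('a) (\<rho> + 1))"
    using card_ball_Int_ball1[OF U] C by (intro sum.cong) auto
  finally show ?thesis using card_ball1_Diff_ball[OF U _ C0(2) \<rho> rn] C0 C by auto
qed

theorem lemma11:
  fixes C :: "('a::{finite,field}^'n::finite) set set"
    and r \<rho> :: nat
  defines "q \<equiv> CARD('a)" and "n \<equiv> CARD('n)"
  assumes "r \<le> n div 2" and "0 < \<rho>" and "\<rho> < r"
    and "C \<subseteq> Er r" and "C \<noteq> {}"
    and "covering_radius r C = \<rho>"
    and "U \<in> {U \<in> Er r. dIC U C = \<rho>} - {Z \<in> Er r. excess r \<rho> C {Z} \<ge> 1}"
  shows "real_of_int (excess r \<rho> C (ballI r 1 U))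
           \<ge> of_int \<lceil>bb q n r \<rho> / cc q (\<rho>+1)\<rceil> * cc q (\<rho>+1) - bb q n r \<rho>"
proof -
  have U: "U \<in> Er r" and dU: "dIC U C = \<rho>" and not_Z: "\<not> 1 \<le> excess r \<rho> C {U}"
    using assms(9) by auto
  obtain C0 where C0: "C0 \<in> C" "dI U C0 = \<rho>" using dIC_attained[OF assms(7), of U] unfolding dU by blast
  have far: "\<rho> < dI U X" if "X \<in> C" "X \<noteq> C0" for X
  proof (rule ccontr)
    assume "\<not> \<rho> < dI U X"
    then show False using excess_singleton_ge_one[OF U that(1) C0(1) that(2)] C0(2) not_Z by simp
  qed
  have cover: "\<exists>X\<in>C. dI V X \<le> \<rho>" if "V \<in> Er r" for V
    using exists_dI_le_covering_radius[OF assms(7) that] unfolding assms(8) .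
  have rn: "r + \<rho> \<le> CARD('n)" using assms(3,5) n_def by linarith
  let ?m = "card {X \<in> C. dI U X = \<rho> + 1}" and ?b = "bb q n r \<rho>" and ?c = "cc q (\<rho> + 1)"
  have excess: "real_of_int (excess r \<rho> C (ballI r 1 U)) = real ?m * ?c - ?b"
    using excess_ball1_eq[OF U assms(6) C0 far assms(4,5) rn] unfolding q_def n_def .
  have "?b \<le> real ?m * ?c"
    using bb_le_card_mult_cc[OF U assms(6) C0 far cover assms(4,5) rn] unfolding q_def n_def .
  moreover have c_pos: "0 < ?c"
    using gbin_1_pos[OF card_field_ge_two[where 'a='a], of "\<rho> + 1"] unfolding cc_def q_def by simp
  ultimately have "\<lceil>?b / ?c\<rceil> \<le> int ?m" by (simp add: ceiling_le_iff divide_le_eq)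
  then have "real_of_int \<lceil>?b / ?c\<rceil> \<le> real ?m" by linarith
  then have "real_of_int \<lceil>?b / ?c\<rceil> * ?c \<le> real ?m * ?c" using c_pos by simp
  then show ?thesis using excess by linarith
qed

end
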